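(* Assume Condition $\mathcal A$. For any $\kappa_1\in(0,\kappa)$ there exist constants $\nu>0$, $c_*>0$ and $\varepsilon_0>0$ such that for all $\varepsilon\in(0,\varepsilon_0)$ $$\sup_{\vartheta\in\Theta}\mathbf P_\vartheta\left\{\sup_{0\le t\le T}|X_t-x_t(\vartheta)|>\varepsilon^{\kappa_1}\right\}\le e^{-c_*\varepsilon^{-\nu}}.$$
   Context: Under $\mathbf P_\vartheta$, $X_t$ solves $dX_t=S(\vartheta,X_t)\,dt+\varepsilon\,dW_t$, $X_0=x_0$, $0\le t\le T$, $W$ a standard Wiener process; $x_t(\vartheta)$ solves the ODE $\frac{dx_t}{dt}=S(\vartheta,x_t)$, $x_0$ given. Condition $\mathcal A$: $S(\vartheta,x)=a|x-\vartheta|^\kappa+h(x)$ with $\kappa\in(0,1/2)$, $a>0$; $h$ bounded with continuous bounded derivative $|h'|\le H_1$ and $h(x)\ge b>0$; $\vartheta\in\Theta=(\alpha,\beta)$, $\alpha>x_0$, $\beta<\inf_{\vartheta\in\Theta}x_T(\vartheta)$. *)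

theory Defs
  imports "HOL-Probability.Probability"
begin

definition standard_wiener :: "'a measure \<Rightarrow> (real \<Rightarrow> 'a \<Rightarrow> real) \<Rightarrow> bool" where
  "standard_wiener M W \<longleftrightarrow>
     prob_space M \<and>
     (\<forall>t\<ge>0. W t \<in> borel_measurable M) \<and>
     (\<forall>\<omega>\<in>space M. W 0 \<omega> = 0) \<and>
     (\<forall>\<omega>\<in>space M. continuous_on {0..} (\<lambda>t. W t \<omega>)) \<and>
     (\<forall>s t. 0 \<le> s \<and> s < t \<longrightarrow>
        distributed M lborel (\<lambda>\<omega>. W t \<omega> - W s \<omega>) (\<lambda>x. ennreal (normal_density 0 (sqrt (t - s)) x))) \<and>
     (\<forall>(n::nat) (u::nat \<Rightarrow> real). 0 \<le> u 0 \<and> (\<forall>i<n. u i < u (Suc i)) \<longrightarrow>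
        prob_space.indep_vars M (\<lambda>_. borel) (\<lambda>i \<omega>. W (u (Suc i)) \<omega> - W (u i) \<omega>) {..<n})"

definition drift :: "real \<Rightarrow> real \<Rightarrow> (real \<Rightarrow> real) \<Rightarrow> real \<Rightarrow> real \<Rightarrow> real" where
  "drift a \<kappa> h \<theta> x = a * \<bar>x - \<theta>\<bar> powr \<kappa> + h x"

text \<open>X solves dX_t = S(X_t) dt + eps dW_t, X_0 = x0, on [0,T] (additive noise, so the
  equation is the pathwise integral equation X_t = x0 + int_0^t S(X_s) ds + eps W_t).\<close>
definition sde_solution :: "'a measure \<Rightarrow> (real \<Rightarrow> 'a \<Rightarrow> real) \<Rightarrow> (real \<Rightarrow> real) \<Rightarrow> real \<Rightarrow> real
    \<Rightarrow> real \<Rightarrow> (real \<Rightarrow> 'a \<Rightarrow> real) \<Rightarrow> bool" where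
  "sde_solution M W Sf x0 \<epsilon> T X \<longleftrightarrow>
     (\<forall>t\<in>{0..T}. X t \<in> borel_measurable M) \<and>
     (\<forall>\<omega>\<in>space M. continuous_on {0..T} (\<lambda>t. X t \<omega>) \<and>
        (\<forall>t\<in>{0..T}. X t \<omega> = x0 + integral {0..t} (\<lambda>s. Sf (X s \<omega>)) + \<epsilon> * W t \<omega>))"

end

theory Submission
  imports Defs
begin

text \<open>Only the size of the noise matters pathwise. Suppose \<open>\<bar>\<epsilon> W t\<bar> \<le> \<eta>\<close> on \<open>[0, T]\<close> and compare
  \<open>X\<close> with \<open>x\<close> through the travel time \<open>F y = \<integral> dz / S z\<close> of the ODE. Along \<open>x\<close>, \<open>F\<close> grows at unit
  rate; along the noise-free part \<open>Y = X - \<epsilon> W\<close> its rate is \<open>S X / S Y\<close>, which differs from 1 by at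
  most \<open>(a + H1) \<eta> powr \<kappa> / b\<close> since the drift is \<open>\<kappa>\<close>-Hoelder. As \<open>S\<close> is bounded on the region
  reachable in time \<open>T\<close>, this gives \<open>\<bar>X - x\<bar> \<le> \<eta> + C \<eta> powr \<kappa>\<close>, which is below \<open>\<epsilon> powr \<kappa>1\<close>
  for \<open>\<eta> = \<epsilon> powr \<gamma>\<close> with \<open>\<kappa>1 < \<gamma> \<kappa>\<close>, \<open>\<gamma> < 1\<close>. A dyadic chaining bound for the Wiener process
  shows that \<open>sup \<bar>W\<bar> > \<epsilon> powr (\<gamma> - 1)\<close> has probability at most \<open>exp (- c \<epsilon> powr (2 \<gamma> - 2))\<close>.\<close>

lemma normal_density_le_wider:
  fixes \<sigma> c y :: real
  assumes "\<sigma> > 0" "0 \<le> c" "c < \<bar>y\<bar>"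
  shows "normal_density 0 \<sigma> y \<le> sqrt 2 * exp (-(c^2)/(4*\<sigma>^2)) * normal_density 0 (sqrt 2 * \<sigma>) y"
proof -
  have s: "sqrt (2 * pi * (sqrt 2 * \<sigma>)\<^sup>2) = sqrt 2 * sqrt (2 * pi * \<sigma>\<^sup>2)"
    by (simp add: power_mult_distrib real_sqrt_mult[symmetric] ac_simps)
  have "c^2 \<le> y^2"
    using assms by (metis abs_ge_zero abs_of_nonneg less_imp_le power2_abs power_mono)
  then have "-(y\<^sup>2)/(2*\<sigma>\<^sup>2) \<le> -(c^2)/(4*\<sigma>^2) + -(y\<^sup>2)/(2*(sqrt 2 * \<sigma>)\<^sup>2)"
    using assms by (simp add: power_mult_distrib field_simps)
  then have "exp (-(y\<^sup>2)/(2*\<sigma>\<^sup>2)) \<le> exp (-(c^2)/(4*\<sigma>^2)) * exp (-(y\<^sup>2)/(2*(sqrt 2 * \<sigma>)\<^sup>2))"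
    by (simp add: exp_add[symmetric])
  moreover have "sqrt (2 * pi * \<sigma>\<^sup>2) > 0" using assms by simp
  ultimately show ?thesis unfolding normal_density_def s by (simp add: field_simps)
qed

lemma distributed_normal_tail_le:
  fixes Z :: "'a \<Rightarrow> real"
  assumes Z: "distributed M lborel Z (\<lambda>x. ennreal (normal_density 0 \<sigma> x))"
    and \<sigma>: "\<sigma> > 0" and c: "0 \<le> c"
  shows "measure M {\<omega>\<in>space M. c < \<bar>Z \<omega>\<bar>} \<le> sqrt 2 * exp (-(c^2)/(4*\<sigma>^2))"
proof -
  let ?A = "{y::real. c < \<bar>y\<bar>}"
  let ?q = "sqrt 2 * exp (-(c^2)/(4*\<sigma>^2))"
  have A: "?A \<in> sets lborel" by measurable
  have "measure M {\<omega>\<in>space M. c < \<bar>Z \<omega>\<bar>} = measure (distr M lborel Z) ?A"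
    using Z A by (subst measure_distr) (auto simp: distributed_def intro!: arg_cong[where f="measure M"])
  also have "\<dots> = measure (density lborel (\<lambda>x. ennreal (normal_density 0 \<sigma> x))) ?A"
    using Z by (simp add: distributed_def)
  also have "\<dots> \<le> ?q"
  proof -
    have "emeasure (density lborel (\<lambda>x. ennreal (normal_density 0 \<sigma> x))) ?A
        = (\<integral>\<^sup>+ y. ennreal (normal_density 0 \<sigma> y) * indicator ?A y \<partial>lborel)"
      using A by (simp add: emeasure_density)
    also have "\<dots> \<le> (\<integral>\<^sup>+ y. ennreal ?q * ennreal (normal_density 0 (sqrt 2 * \<sigma>) y) \<partial>lborel)"
    proof (rule nn_integral_mono)
      fix y :: real
      show "ennreal (normal_density 0 \<sigma> y) * indicator ?A y \<le> ennreal ?q * ennreal (normal_density 0 (sqrt 2 * \<sigma>) y)"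
        using normal_density_le_wider[OF \<sigma> c, of y] by (cases "c < \<bar>y\<bar>") (simp_all add: ennreal_mult[symmetric])
    qed
    also have "\<dots> = ennreal ?q"
      using \<sigma> by (simp add: nn_integral_cmult nn_integral_eq_integral)
    finally show ?thesis by (simp add: measure_def enn2real_leI)
  qed
  finally show ?thesis .
qed

lemma dyadic_points_bound:
  fixes f :: "real \<Rightarrow> real" and T r :: real
  assumes f0: "f 0 = 0" and r: "0 \<le> r"
    and inc: "\<And>n k. k < 2^n \<Longrightarrow> \<bar>f (real (Suc k) * T / 2^n) - f (real k * T / 2^n)\<bar> \<le> r * ((1/4) * (3/4)^n)"
  shows "k \<le> 2^N \<Longrightarrow> \<bar>f (real k * T / 2^N)\<bar> \<le> r * (1 - (3/4)^(Suc N))"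
proof (induction N arbitrary: k)
  case 0
  then consider "k = 0" | "k = 1" by force
  then show ?case
  proof cases
    case 2
    have "\<bar>f (real (Suc 0) * T / 2^0) - f (real 0 * T / 2^0)\<bar> \<le> r * ((1/4) * (3/4)^0)"
      by (rule inc) simp
    then show ?thesis using 2 f0 by simp
  qed (use f0 r in simp)
next
  case (Suc N)
  show ?case
  proof (cases "even k")
    case True
    then obtain j where kj: "k = 2*j" by blast
    with Suc.prems have "\<bar>f (real j * T / 2^N)\<bar> \<le> r * (1 - (3/4)^(Suc N))" by (intro Suc.IH) simp
    moreover have "r * (1 - (3/4)^(Suc N)) \<le> r * (1 - (3/4)^(Suc (Suc N)))"
      using r by (intro mult_left_mono) (auto simp: power_Suc)
    moreover have "real k * T / 2^(Suc N) = real j * T / 2^N" using kj by simp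
    ultimately show ?thesis by simp
  next
    case False
    then obtain j where kj: "k = Suc (2*j)" by (metis oddE Suc_eq_plus1)
    with Suc.prems have j: "j < 2^N" by simp
    have "\<bar>f (real (Suc (2*j)) * T / 2^(Suc N)) - f (real (2*j) * T / 2^(Suc N))\<bar> \<le> r * ((1/4) * (3/4)^(Suc N))"
      using j by (intro inc) simp
    moreover have "\<bar>f (real j * T / 2^N)\<bar> \<le> r * (1 - (3/4)^(Suc N))"
      using Suc.IH[of j] j by simp
    moreover have "real (2*j) * T / 2^(Suc N) = real j * T / 2^N" by simp
    moreover have "r * ((1/4) * (3/4)^(Suc N)) + r * (1 - (3/4)^(Suc N)) = r * (1 - (3/4)^(Suc (Suc N)))"
      by (simp add: algebra_simps power_Suc)
    ultimately show ?thesis using kj by (smt (verit))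
  qed
qed

lemma bound_of_dyadic_increments:
  fixes f :: "real \<Rightarrow> real" and T r :: real
  assumes T: "T > 0" and cont: "continuous_on {0..T} f" and f0: "f 0 = 0" and r: "0 \<le> r"
    and inc: "\<And>n k. k < 2^n \<Longrightarrow> \<bar>f (real (Suc k) * T / 2^n) - f (real k * T / 2^n)\<bar> \<le> r * ((1/4) * (3/4)^n)"
    and t: "t \<in> {0..T}"
  shows "\<bar>f t\<bar> \<le> r"
proof -
  define k where "k N = nat \<lfloor>t * 2^N / T\<rfloor>" for N :: nat
  define s where "s N = real (k N) * T / 2^N" for N :: nat
  have kN: "real (k N) = of_int \<lfloor>t * 2^N / T\<rfloor>" for N
    using t T unfolding k_def by simp
  have s_le: "s N \<le> t" for N
  proof -
    have "real (k N) \<le> t * 2^N / T" using kN[of N] of_int_floor_le[of "t * 2^N / T"] by linarith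
    then have "real (k N) * T \<le> t * 2^N" using T by (simp add: pos_le_divide_eq)
    then show ?thesis unfolding s_def by (simp add: pos_divide_le_eq)
  qed
  have s_ge: "t - T / 2^N \<le> s N" for N
  proof -
    have "t * 2^N / T - 1 \<le> real (k N)"
      using kN[of N] real_of_int_floor_gt_diff_one[of "t * 2^N / T"] by linarith
    then have "(t * 2^N / T - 1) * T / 2^N \<le> real (k N) * T / 2^N"
      using T by (intro divide_right_mono mult_right_mono) auto
    moreover have "(t * 2^N / T - 1) * T / 2^N = t - T / 2^N"
      using T by (simp add: diff_divide_distrib left_diff_distrib)
    ultimately show ?thesis unfolding s_def by simp
  qed
  have s_nn: "0 \<le> s N" for N using T unfolding s_def by simp
  have k_le: "k N \<le> 2^N" for N
  proof -
    have "t * 2^N \<le> 2^N * T" using t by (simp add: mult.commute)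
    then have "t * 2^N / T \<le> 2^N" using T by (simp add: pos_divide_le_eq)
    then have "real (k N) \<le> 2^N" using kN[of N] of_int_floor_le[of "t * 2^N / T"] by linarith
    then have "real (k N) \<le> real ((2::nat)^N)" by simp
    then show ?thesis by (simp only: of_nat_le_iff)
  qed
  have bnd: "\<bar>f (s N)\<bar> \<le> r" for N
  proof -
    have "\<bar>f (s N)\<bar> \<le> r * (1 - (3/4)^(Suc N))"
      unfolding s_def by (rule dyadic_points_bound[OF f0 r inc k_le])
    also have "\<dots> \<le> r" using r by (simp add: mult_left_le)
    finally show ?thesis .
  qed
  have "(\<lambda>N. T * (1/2)^N) \<longlonglongrightarrow> T * 0"
    by (intro tendsto_mult tendsto_const LIMSEQ_power_zero) auto
  then have lim: "(\<lambda>N. t - T / 2^N) \<longlonglongrightarrow> t"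
    using tendsto_diff[OF tendsto_const, of "\<lambda>N. T / 2^N" 0 sequentially t]
    by (simp add: power_one_over)
  have "s \<longlonglongrightarrow> t"
    by (rule real_tendsto_sandwich[OF _ _ lim tendsto_const]) (use s_ge s_le in auto)
  then have "(\<lambda>N. f (s N)) \<longlonglongrightarrow> f t"
    by (rule continuous_on_tendsto_compose[OF cont])
      (use t s_nn s_le in \<open>auto intro!: always_eventually order_trans[OF s_le]\<close>)
  then show ?thesis
    by (rule tendsto_upperbound[OF tendsto_rabs]) (use bnd in auto)
qed

lemma standard_wiener_dyadic_increment_tail:
  fixes W :: "real \<Rightarrow> 'a \<Rightarrow> real"
  assumes sw: "standard_wiener M W" and T: "T > 0" and r: "0 \<le> r"
  shows "measure M {\<omega>\<in>space M. r * ((1/4) * (3/4)^n) < \<bar>W (real (Suc k) * T / 2^n) \<omega> - W (real k * T / 2^n) \<omega>\<bar>}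
    \<le> sqrt 2 * exp (-(r^2 / (64*T) * (9/8)^n))"
proof -
  define s where "s = real k * T / 2^n"
  define t where "t = real (Suc k) * T / 2^n"
  have st: "0 \<le> s" "s < t" using T unfolding s_def t_def by (auto simp: divide_strict_right_mono)
  have ts: "t - s = T / 2^n" unfolding s_def t_def by (simp add: field_simps)
  have "distributed M lborel (\<lambda>\<omega>. W t \<omega> - W s \<omega>) (\<lambda>x. ennreal (normal_density 0 (sqrt (T / 2^n)) x))"
    using sw st ts unfolding standard_wiener_def by metis
  then have "measure M {\<omega>\<in>space M. r * ((1/4) * (3/4)^n) < \<bar>W t \<omega> - W s \<omega>\<bar>}
      \<le> sqrt 2 * exp (-((r * ((1/4) * (3/4)^n))^2)/(4*(sqrt (T / 2^n))^2))"
    by (rule distributed_normal_tail_le) (use T r in auto)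
  also have "-((r * ((1/4) * (3/4)^n))^2)/(4*(sqrt (T / 2^n))^2) = -(r^2 / (64*T) * (9/8)^n)"
  proof -
    have "((3/4::real)^n)^2 * 2^n = ((3/4)^2)^n * 2^n" by (metis power_mult mult.commute)
    also have "\<dots> = ((3/4)^2 * 2)^n" by (rule power_mult_distrib[symmetric])
    also have "((3/4::real)^2 * 2) = 9/8" by (simp add: power2_eq_square)
    finally show ?thesis using T by (simp add: power_mult_distrib field_simps)
  qed
  finally show ?thesis unfolding s_def t_def by simp
qed

lemma union_bound_dyadic_level_le:
  fixes K :: real and n :: nat
  assumes K: "K \<ge> 32"
  shows "2^n * (sqrt 2 * exp (-(K * (9/8)^n))) \<le> sqrt 2 * exp (-K) * (1/2)^n"
proof -
  have "1 + real n * (1/8) \<le> (1 + 1/8::real)^n" by (rule Bernoulli_inequality) simp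
  then have "exp (-(K * (9/8)^n)) \<le> exp (-(K * (1 + real n / 8)))"
    using K by (simp add: mult_left_mono)
  also have "\<dots> = exp (-K) * exp (-K/8) ^ n"
    by (simp add: exp_of_nat_mult[symmetric] exp_add[symmetric] algebra_simps)
  finally have e1: "exp (-(K * (9/8)^n)) \<le> exp (-K) * exp (-K/8) ^ n" .
  have "4 \<le> exp (K/8)" using exp_ge_add_one_self[of "K/8"] K by linarith
  then have "exp (-K/8) \<le> 1/4" by (simp add: exp_minus field_simps)
  then have "(2::real)^n * exp (-K/8) ^ n \<le> 2^n * (1/4)^n"
    by (intro mult_left_mono power_mono) auto
  also have "\<dots> = (1/2)^n" by (simp add: power_mult_distrib[symmetric])
  finally have "(2::real)^n * exp (-K/8) ^ n \<le> (1/2)^n" .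
  with e1 show ?thesis
    by (smt (verit, ccfv_SIG) exp_gt_zero mult.assoc mult.left_commute mult_left_mono real_sqrt_ge_zero zero_le_power)
qed

text \<open>The level-\<open>n\<close> threshold \<open>r/4 (3/4)\<^sup>n\<close> shrinks more slowly than the standard deviation
  \<open>\<surd>(T/2\<^sup>n)\<close> of a level-\<open>n\<close> increment, so the Gaussian exponent grows like \<open>(9/8)\<^sup>n\<close> and beats
  the \<open>2\<^sup>n\<close> terms of the union bound, while the thresholds still sum to \<open>r\<close>.\<close>
definition large_dyadic_increment :: "'a measure \<Rightarrow> (real \<Rightarrow> 'a \<Rightarrow> real) \<Rightarrow> real \<Rightarrow> real \<Rightarrow> nat \<Rightarrow> 'a set" where
  "large_dyadic_increment M W T r n = {\<omega>\<in>space M. \<exists>k<(2::nat)^n.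
     r * ((1/4) * (3/4)^n) < \<bar>W (real (Suc k) * T / 2^n) \<omega> - W (real k * T / 2^n) \<omega>\<bar>}"

lemma standard_wiener_large_dyadic_increment_prob_le:
  fixes W :: "real \<Rightarrow> 'a \<Rightarrow> real"
  assumes sw: "standard_wiener M W" and T: "T > 0" and r: "0 \<le> r" "2048 * T \<le> r^2"
  shows "(\<Union>n. large_dyadic_increment M W T r n) \<in> sets M"
    and "measure M (\<Union>n. large_dyadic_increment M W T r n) \<le> exp (-(r^2 / (128*T)))"
proof -
  interpret prob_space M using sw by (simp add: standard_wiener_def)
  define K where "K = r^2 / (64*T)"
  have K: "K \<ge> 32" using r T unfolding K_def by (simp add: field_simps)
  define E where "E n k = {\<omega>\<in>space M. r * ((1/4) * (3/4)^n) < \<bar>W (real (Suc k) * T / 2^n) \<omega> - W (real k * T / 2^n) \<omega>\<bar>}"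
    for n k :: nat
  define G where "G = large_dyadic_increment M W T r"
  have G_eq: "G n = (\<Union>k<2^n. E n k)" for n unfolding G_def E_def large_dyadic_increment_def by auto
  have E_sets: "E n k \<in> sets M" for n k
  proof -
    have "W (real j * T / 2^n) \<in> borel_measurable M" for j
      using sw T unfolding standard_wiener_def by simp
    then show ?thesis unfolding E_def by measurable
  qed
  then have G_sets: "G n \<in> sets M" for n unfolding G_eq by auto
  then show "(\<Union>n. large_dyadic_increment M W T r n) \<in> sets M" unfolding G_def by auto
  define q where "q n = sqrt 2 * exp (-K) * (1/2)^n" for n :: nat
  have G_le: "measure M (G n) \<le> q n" for n
  proof -
    have "measure M (G n) \<le> (\<Sum>k<2^n. measure M (E n k))"
      unfolding G_eq by (rule measure_UNION_le) (auto intro: E_sets)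
    also have "\<dots> \<le> (\<Sum>k<(2::nat)^n. sqrt 2 * exp (-(K * (9/8)^n)))"
      unfolding E_def K_def by (intro sum_mono standard_wiener_dyadic_increment_tail[OF sw T r(1)])
    also have "\<dots> \<le> q n" unfolding q_def using union_bound_dyadic_level_le[OF K] by simp
    finally show ?thesis .
  qed
  have q_sums: "q sums (sqrt 2 * exp (-K) * 2)"
    unfolding q_def using geometric_sums[of "1/2::real"] by (intro sums_mult) simp
  then have q_summable: "summable q" by (rule sums_summable)
  have G_summable: "summable (\<lambda>n. measure M (G n))"
    by (rule summable_comparison_test[OF _ q_summable]) (use G_le in auto)
  have "measure M (\<Union>n. G n) \<le> (\<Sum>n. measure M (G n))"
    by (rule finite_measure_subadditive_countably) (use G_sets G_summable in auto)
  also have "\<dots> \<le> (\<Sum>n. q n)"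
    by (rule suminf_le[OF G_le G_summable q_summable])
  also have "\<dots> = sqrt 2 * exp (-K) * 2"
    using q_sums by (rule sums_unique[symmetric])
  also have "\<dots> \<le> exp (K/2) * exp (-K)"
  proof -
    have "sqrt 2 \<le> sqrt (2^2)" by (subst real_sqrt_le_iff) simp
    then have "sqrt 2 \<le> 2" by simp
    then have "2 * sqrt 2 \<le> exp (K/2)" using exp_ge_add_one_self[of "K/2"] K by linarith
    then have "2 * sqrt 2 * exp (-K) \<le> exp (K/2) * exp (-K)" by (rule mult_right_mono) simp
    then show ?thesis by (simp add: ac_simps)
  qed
  also have "\<dots> = exp (-(K/2))" by (simp add: exp_add[symmetric])
  finally show "measure M (\<Union>n. large_dyadic_increment M W T r n) \<le> exp (-(r^2 / (128*T)))"
    unfolding K_def G_def by simp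
qed

lemma standard_wiener_sup_tail:
  fixes W :: "real \<Rightarrow> 'a \<Rightarrow> real"
  assumes sw: "standard_wiener M W" and T: "T > 0" and r: "0 \<le> r" "2048 * T \<le> r^2"
    and A: "A \<subseteq> {\<omega>\<in>space M. \<exists>t\<in>{0..T}. r < \<bar>W t \<omega>\<bar>}"
  shows "measure M A \<le> exp (-(r^2 / (128*T)))"
proof -
  have A_sub: "A \<subseteq> (\<Union>n. large_dyadic_increment M W T r n)"
  proof
    fix \<omega> assume "\<omega> \<in> A"
    with A obtain t where \<omega>: "\<omega> \<in> space M" and t: "t \<in> {0..T}" "r < \<bar>W t \<omega>\<bar>" by auto
    show "\<omega> \<in> (\<Union>n. large_dyadic_increment M W T r n)"
    proof (rule ccontr)
      assume "\<omega> \<notin> (\<Union>n. large_dyadic_increment M W T r n)"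
      then have "\<bar>W (real (Suc k) * T / 2^n) \<omega> - W (real k * T / 2^n) \<omega>\<bar> \<le> r * ((1/4) * (3/4)^n)"
        if "k < 2^n" for n k
        using \<omega> that unfolding large_dyadic_increment_def by force
      moreover have "continuous_on {0..T} (\<lambda>t. W t \<omega>)" "W 0 \<omega> = 0"
        using sw \<omega> unfolding standard_wiener_def by (auto intro: continuous_on_subset)
      ultimately have "\<bar>W t \<omega>\<bar> \<le> r"
        using bound_of_dyadic_increments[OF T _ _ r(1) _ t(1)] by blast
      with t show False by simp
    qed
  qed
  interpret prob_space M using sw by (simp add: standard_wiener_def)
  have "measure M A \<le> measure M (\<Union>n. large_dyadic_increment M W T r n)"
  proof (cases "A \<in> sets M")
    case True then show ?thesis
      using A_sub standard_wiener_large_dyadic_increment_prob_le(1)[OF sw T r] by (intro finite_measure_mono)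
  qed (simp add: measure_notin_sets)
  also have "\<dots> \<le> exp (-(r^2 / (128*T)))"
    by (rule standard_wiener_large_dyadic_increment_prob_le(2)[OF sw T r])
  finally show ?thesis .
qed

lemma le_powr_of_le_one:
  fixes x k :: real
  assumes "0 \<le> x" "x \<le> 1" "k \<le> 1"
  shows "x \<le> x powr k"
proof (cases "x = 0")
  case False
  have "x powr 1 \<le> x powr k" by (rule powr_mono') (use assms in auto)
  then show ?thesis using assms by simp
qed simp

lemma powr_add_le_add_powr:
  fixes x y k :: real
  assumes "0 \<le> x" "0 \<le> y" "0 < k" "k \<le> 1"
  shows "(x + y) powr k \<le> x powr k + y powr k"
proof (cases "x + y = 0")
  case False
  define s where "s = x + y"
  have s: "s > 0" using False assms unfolding s_def by simp
  have "x / s \<le> (x / s) powr k" "y / s \<le> (y / s) powr k"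
    using assms s by (auto intro!: le_powr_of_le_one simp: s_def)
  then have "x / s \<le> x powr k / s powr k" "y / s \<le> y powr k / s powr k"
    using assms s by (simp_all add: powr_divide)
  moreover have "1 = x / s + y / s" using s unfolding s_def by (simp add: add_divide_distrib[symmetric])
  ultimately have "1 \<le> (x powr k + y powr k) / s powr k" by (simp add: add_divide_distrib)
  then show ?thesis using s unfolding s_def by (simp add: pos_le_divide_eq)
qed (use assms in simp)

lemma abs_powr_diff_le:
  fixes p q k :: real
  assumes "0 \<le> p" "0 \<le> q" "0 < k" "k \<le> 1"
  shows "\<bar>p powr k - q powr k\<bar> \<le> \<bar>p - q\<bar> powr k"
proof -
  have ordered: "\<bar>p powr k - q powr k\<bar> \<le> \<bar>p - q\<bar> powr k" if "0 \<le> q" "q \<le> p" for p q :: real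
  proof -
    have "p powr k \<le> q powr k + (p - q) powr k"
      using powr_add_le_add_powr[of q "p - q" k] that assms by simp
    moreover have "q powr k \<le> p powr k" by (rule powr_mono2) (use that assms in auto)
    ultimately show ?thesis using that by simp
  qed
  show ?thesis
    using ordered[of q p] ordered[of p q] assms by (cases "q \<le> p") (auto simp: abs_minus_commute)
qed

lemma abs_diff_le_of_deriv_bound:
  fixes f f' :: "real \<Rightarrow> real"
  assumes f': "\<And>y. (f has_real_derivative f' y) (at y)" and bound: "\<And>y. \<bar>f' y\<bar> \<le> B"
  shows "\<bar>f u - f v\<bar> \<le> B * \<bar>u - v\<bar>"
proof -
  have ordered: "\<bar>f v - f u\<bar> \<le> B * \<bar>v - u\<bar>" if uv: "u < v" for u v
  proof -
    obtain z where "f v - f u = (v - u) * f' z" using MVT2[OF uv, of f f'] f' by blast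
    then have "\<bar>f v - f u\<bar> = \<bar>v - u\<bar> * \<bar>f' z\<bar>" by (simp add: abs_mult)
    also have "\<dots> \<le> \<bar>v - u\<bar> * B" by (rule mult_left_mono[OF bound]) simp
    finally show ?thesis by (simp add: mult.commute)
  qed
  show ?thesis
    using ordered[of u v] ordered[of v u] by (cases u v rule: linorder_cases) (auto simp: abs_minus_commute)
qed

lemma drift_abs_diff_le:
  fixes h h' :: "real \<Rightarrow> real"
  assumes h': "\<And>y. (h has_real_derivative h' y) (at y)" "\<And>y. \<bar>h' y\<bar> \<le> H1"
    and a: "0 < a" and \<kappa>: "0 < \<kappa>" "\<kappa> \<le> 1" and \<eta>: "0 \<le> \<eta>" "\<eta> \<le> 1"
    and uv: "\<bar>u - v\<bar> \<le> \<eta>"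
  shows "\<bar>drift a \<kappa> h \<theta> u - drift a \<kappa> h \<theta> v\<bar> \<le> (a + H1) * \<eta> powr \<kappa>"
proof -
  have H1: "0 \<le> H1" using h'(2)[of 0] by simp
  have "\<bar>\<bar>u - \<theta>\<bar> powr \<kappa> - \<bar>v - \<theta>\<bar> powr \<kappa>\<bar> \<le> \<bar>\<bar>u - \<theta>\<bar> - \<bar>v - \<theta>\<bar>\<bar> powr \<kappa>"
    by (rule abs_powr_diff_le) (use \<kappa> in auto)
  also have "\<dots> \<le> \<eta> powr \<kappa>"
    by (rule powr_mono2) (use \<kappa> uv in auto)
  finally have "a * \<bar>\<bar>u - \<theta>\<bar> powr \<kappa> - \<bar>v - \<theta>\<bar> powr \<kappa>\<bar> \<le> a * \<eta> powr \<kappa>"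
    using a by simp
  moreover have "\<bar>h u - h v\<bar> \<le> H1 * \<eta> powr \<kappa>"
  proof -
    have "\<bar>h u - h v\<bar> \<le> H1 * \<bar>u - v\<bar>" by (rule abs_diff_le_of_deriv_bound[OF h'])
    also have "\<dots> \<le> H1 * \<eta> powr \<kappa>"
      using uv le_powr_of_le_one[OF \<eta> \<kappa>(2)] H1 by (intro mult_left_mono) auto
    finally show ?thesis .
  qed
  moreover have "\<bar>drift a \<kappa> h \<theta> u - drift a \<kappa> h \<theta> v\<bar>
      = \<bar>a * (\<bar>u - \<theta>\<bar> powr \<kappa> - \<bar>v - \<theta>\<bar> powr \<kappa>) + (h u - h v)\<bar>"
    unfolding drift_def by (simp add: algebra_simps)
  moreover have "\<dots> \<le> a * \<bar>\<bar>u - \<theta>\<bar> powr \<kappa> - \<bar>v - \<theta>\<bar> powr \<kappa>\<bar> + \<bar>h u - h v\<bar>"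
    using a by (simp add: abs_mult abs_triangle_ineq[THEN order_trans])
  moreover have "(a + H1) * \<eta> powr \<kappa> = a * \<eta> powr \<kappa> + H1 * \<eta> powr \<kappa>"
    by (rule distrib_right)
  ultimately show ?thesis by linarith
qed

lemma continuous_on_drift:
  fixes h h' :: "real \<Rightarrow> real"
  assumes "\<And>y. (h has_real_derivative h' y) (at y)" and "0 < \<kappa>"
  shows "continuous_on UNIV (drift a \<kappa> h \<theta>)"
proof -
  have h: "continuous_on UNIV h"
    using assms(1) by (intro continuous_at_imp_continuous_on) (auto intro: DERIV_isCont)
  have powr: "continuous_on UNIV (\<lambda>y. \<bar>y - \<theta>\<bar> powr \<kappa>)"
    by (rule continuous_on_powr') (use assms(2) in \<open>auto intro!: continuous_intros\<close>)
  show ?thesis unfolding drift_def[abs_def] by (intro continuous_intros h powr)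
qed

text \<open>For \<open>S > 0\<close>, the time a solution of \<open>x' = S x\<close> needs to travel from \<open>c\<close> to \<open>y\<close>.\<close>
definition inverse_speed_primitive :: "(real \<Rightarrow> real) \<Rightarrow> real \<Rightarrow> real \<Rightarrow> real" where
  "inverse_speed_primitive S c y = integral {c..y} (\<lambda>z. 1 / S z)"

context
  fixes S :: "real \<Rightarrow> real" and c :: real
  assumes S_cont: "continuous_on UNIV S" and S_pos: "\<And>y. 0 < S y"
begin

lemma integrable_inverse_speed: "(\<lambda>z. 1 / S z) integrable_on {u..v}"
  by (intro integrable_continuous_interval continuous_intros continuous_on_subset[OF S_cont])
    (auto simp: S_pos less_imp_neq[symmetric])

lemma has_real_derivative_inverse_speed_primitive:
  assumes "c < y"
  shows "(inverse_speed_primitive S c has_real_derivative 1 / S y) (at y)"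
proof -
  have "continuous_on UNIV (\<lambda>z. 1 / S z)"
    by (intro continuous_intros S_cont) (auto simp: S_pos less_imp_neq[symmetric])
  then have "((\<lambda>y. integral {c..y} (\<lambda>z. 1 / S z)) has_real_derivative 1 / S y) (at y within {c..y+1})"
    by (intro integral_has_real_derivative) (use assms in \<open>auto intro: continuous_on_subset\<close>)
  then show ?thesis
    using assms unfolding inverse_speed_primitive_def[abs_def] by (simp add: at_within_Icc_at)
qed

lemma inverse_speed_primitive_diff:
  assumes "c \<le> u" "u \<le> v"
  shows "inverse_speed_primitive S c v - inverse_speed_primitive S c u = integral {u..v} (\<lambda>z. 1 / S z)"
  using Henstock_Kurzweil_Integration.integral_combine[OF assms integrable_inverse_speed]
  unfolding inverse_speed_primitive_def by simp

lemma inverse_speed_primitive_mono: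
  assumes "c \<le> u" "u \<le> v"
  shows "inverse_speed_primitive S c u \<le> inverse_speed_primitive S c v"
  using integral_nonneg[OF integrable_inverse_speed, of u v] inverse_speed_primitive_diff[OF assms]
  by (simp add: S_pos less_imp_le)

lemma inverse_speed_primitive_increment_ge:
  assumes "c \<le> u" "u \<le> v" and Smax: "\<And>z. z \<in> {u..v} \<Longrightarrow> S z \<le> Smax"
  shows "(v - u) / Smax \<le> inverse_speed_primitive S c v - inverse_speed_primitive S c u"
proof -
  have "integral {u..v} (\<lambda>z. 1 / Smax) \<le> integral {u..v} (\<lambda>z. 1 / S z)"
    by (rule integral_le) (auto intro: integrable_inverse_speed simp: Smax S_pos frac_le)
  then show ?thesis using inverse_speed_primitive_diff[OF assms(1,2)] assms(2) by simp
qed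

lemma abs_diff_le_inverse_speed_primitive:
  assumes "c \<le> p" "u \<in> {p..q}" "v \<in> {p..q}" and Smax: "\<And>z. z \<in> {p..q} \<Longrightarrow> S z \<le> Smax"
  shows "\<bar>v - u\<bar> \<le> Smax * \<bar>inverse_speed_primitive S c v - inverse_speed_primitive S c u\<bar>"
proof -
  have "S u \<le> Smax" using Smax assms(2) by blast
  then have Smax_pos: "0 < Smax" using S_pos[of u] by linarith
  have "b - a \<le> Smax * \<bar>inverse_speed_primitive S c b - inverse_speed_primitive S c a\<bar>"
    if "a \<in> {p..q}" "b \<in> {p..q}" "a \<le> b" for a b
  proof -
    have "(b - a) / Smax \<le> \<bar>inverse_speed_primitive S c b - inverse_speed_primitive S c a\<bar>"
      using inverse_speed_primitive_increment_ge[of a b Smax] that assms Smax by force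
    then show ?thesis using Smax_pos by (simp add: pos_divide_le_eq mult.commute)
  qed
  from this[of u v] this[of v u] assms show ?thesis
    by (cases "u \<le> v") (auto simp: abs_minus_commute)
qed

lemma le_of_inverse_speed_primitive_less:
  assumes "c \<le> p" "p \<le> v" "0 < R" and Smax: "\<And>z. z \<in> {p..p+R} \<Longrightarrow> S z \<le> Smax"
    and "inverse_speed_primitive S c v - inverse_speed_primitive S c p < R / Smax"
  shows "v \<le> p + R"
proof (rule ccontr)
  assume "\<not> v \<le> p + R"
  then have "inverse_speed_primitive S c (p + R) \<le> inverse_speed_primitive S c v"
    using assms by (intro inverse_speed_primitive_mono) auto
  moreover have "R / Smax \<le> inverse_speed_primitive S c (p + R) - inverse_speed_primitive S c p"
    using inverse_speed_primitive_increment_ge[of p "p + R" Smax] assms by simp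
  ultimately show False using assms(5) by simp
qed

end

lemma has_integral_derivative_within_Icc:
  fixes f f' :: "real \<Rightarrow> real"
  assumes f': "\<And>s. s \<in> {0..T} \<Longrightarrow> (f has_real_derivative f' s) (at s within {0..T})"
    and t: "t \<in> {0..T}"
  shows "(f' has_integral (f t - f 0)) {0..t}"
proof (rule fundamental_theorem_of_calculus)
  fix s assume s: "s \<in> {0..t}"
  then have "(f has_real_derivative f' s) (at s within {0..t})"
    using t by (intro DERIV_subset[OF f']) auto
  then show "(f has_vector_derivative f' s) (at s within {0..t})"
    by (simp add: has_real_derivative_iff_has_vector_derivative)
qed (use t in simp)

lemma inverse_speed_primitive_along_path:
  fixes S Y V :: "real \<Rightarrow> real"
  assumes S_cont: "continuous_on UNIV S" and S_pos: "\<And>y. 0 < S y"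
    and Y': "\<And>s. s \<in> {0..T} \<Longrightarrow> (Y has_real_derivative V s) (at s within {0..T})"
    and Y_gt: "\<And>s. s \<in> {0..T} \<Longrightarrow> c < Y s" and t: "t \<in> {0..T}"
  shows "((\<lambda>s. V s / S (Y s)) has_integral
    (inverse_speed_primitive S c (Y t) - inverse_speed_primitive S c (Y 0))) {0..t}"
proof (rule has_integral_derivative_within_Icc[OF _ t])
  fix s assume s: "s \<in> {0..T}"
  have "(inverse_speed_primitive S c \<circ> Y has_real_derivative 1 / S (Y s) * V s) (at s within {0..T})"
    by (intro DERIV_chain has_real_derivative_inverse_speed_primitive S_cont S_pos Y' Y_gt s)
  then show "((\<lambda>s. inverse_speed_primitive S c (Y s)) has_real_derivative V s / S (Y s)) (at s within {0..T})"
    by (simp add: o_def)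
qed

lemma inverse_speed_primitive_along_solution:
  fixes S x :: "real \<Rightarrow> real"
  assumes S_cont: "continuous_on UNIV S" and S_pos: "\<And>y. 0 < S y"
    and x': "\<And>s. s \<in> {0..T} \<Longrightarrow> (x has_real_derivative S (x s)) (at s within {0..T})"
    and x_gt: "\<And>s. s \<in> {0..T} \<Longrightarrow> c < x s" and t: "t \<in> {0..T}"
  shows "inverse_speed_primitive S c (x t) - inverse_speed_primitive S c (x 0) = t"
proof -
  have "((\<lambda>s. S (x s) / S (x s)) has_integral t) {0..t}"
    using has_integral_const_real[of "1::real" 0 t] t S_pos by (simp add: less_imp_neq[symmetric])
  with inverse_speed_primitive_along_path[OF S_cont S_pos x' x_gt t] show ?thesis
    by (rule has_integral_unique)
qed

lemma inverse_speed_primitive_perturbed_path: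
  fixes S X Y x :: "real \<Rightarrow> real"
  assumes S_cont: "continuous_on UNIV S" and S_ge: "\<And>y. b \<le> S y" and b: "b > 0"
    and Y': "\<And>s. s \<in> {0..T} \<Longrightarrow> (Y has_real_derivative S (X s)) (at s within {0..T})"
    and x': "\<And>s. s \<in> {0..T} \<Longrightarrow> (x has_real_derivative S (x s)) (at s within {0..T})"
    and Y_gt: "\<And>s. s \<in> {0..T} \<Longrightarrow> c < Y s" and x_gt: "\<And>s. s \<in> {0..T} \<Longrightarrow> c < x s"
    and Yx0: "Y 0 = x 0" and S_XY: "\<And>s. s \<in> {0..T} \<Longrightarrow> \<bar>S (X s) - S (Y s)\<bar> \<le> L"
    and t: "t \<in> {0..T}"
  shows "\<bar>inverse_speed_primitive S c (Y t) - inverse_speed_primitive S c (x t)\<bar> \<le> L / b * t"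
proof -
  let ?F = "inverse_speed_primitive S c"
  have S_pos: "0 < S y" for y using S_ge[of y] b by linarith
  have L: "0 \<le> L" using S_XY[of 0] t by force
  have "((\<lambda>s. S (X s) / S (Y s) - S (x s) / S (x s)) has_integral (?F (Y t) - ?F (x t))) (cbox 0 t)"
    using has_integral_diff[OF inverse_speed_primitive_along_path[OF S_cont S_pos Y' Y_gt t]
        inverse_speed_primitive_along_path[OF S_cont S_pos x' x_gt t]] Yx0 by simp
  then have "norm (?F (Y t) - ?F (x t)) \<le> L / b * measure lborel (cbox 0 t)"
  proof (rule has_integral_bound[rotated])
    fix s assume "s \<in> cbox 0 t"
    then have s: "s \<in> {0..T}" using t by auto
    have "S (X s) / S (Y s) - S (x s) / S (x s) = (S (X s) - S (Y s)) / S (Y s)"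
      using S_pos[of "Y s"] S_pos[of "x s"] by (simp add: field_simps)
    then show "norm (S (X s) / S (Y s) - S (x s) / S (x s)) \<le> L / b"
      using S_XY[OF s] S_ge[of "Y s"] b L by (simp add: abs_div frac_le)
  qed (use L b in simp)
  then show ?thesis using t by simp
qed

lemma perturbed_ode_deviation_le:
  fixes S X g x :: "real \<Rightarrow> real"
  assumes T: "T > 0" and S_cont: "continuous_on UNIV S" and S_ge: "\<And>y. b \<le> S y" and b: "b > 0"
    and R: "R > 0" "R > 2 * T * Smax" and Smax: "\<And>z. z \<in> {x0..x0+R} \<Longrightarrow> S z \<le> Smax"
    and S_mod: "\<And>u v. \<bar>u - v\<bar> \<le> \<eta> \<Longrightarrow> \<bar>S u - S v\<bar> \<le> L" and L: "L \<le> b"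
    and X_cont: "continuous_on {0..T} X"
    and X_eq: "\<And>t. t \<in> {0..T} \<Longrightarrow> X t = x0 + integral {0..t} (\<lambda>s. S (X s)) + g t"
    and g: "\<And>t. t \<in> {0..T} \<Longrightarrow> \<bar>g t\<bar> \<le> \<eta>"
    and x0: "x 0 = x0" and x': "\<And>t. t \<in> {0..T} \<Longrightarrow> (x has_real_derivative S (x t)) (at t within {0..T})"
    and t: "t \<in> {0..T}"
  shows "\<bar>X t - x t\<bar> \<le> \<eta> + Smax * T * L / b"
proof -
  have S_pos: "0 < S y" for y using S_ge[of y] b by linarith
  have Smax_ge: "b \<le> Smax" using Smax[of x0] S_ge[of x0] R by simp
  have L_nonneg: "0 \<le> L" using S_mod[of 0 0] g[of 0] T by force
  define F where "F = inverse_speed_primitive S (x0 - 1)"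
  define Y where "Y t = x0 + integral {0..t} (\<lambda>s. S (X s))" for t
  have SX_cont: "continuous_on {0..T} (\<lambda>s. S (X s))"
    by (rule continuous_on_compose2[OF S_cont X_cont]) auto
  have Y': "(Y has_real_derivative S (X s)) (at s within {0..T})" if "s \<in> {0..T}" for s
    unfolding Y_def using integral_has_real_derivative[OF SX_cont that]
    by (intro DERIV_const DERIV_add[THEN DERIV_cong]) auto
  have Y_ge: "x0 \<le> Y s" if "s \<in> {0..T}" for s
    using has_integral_derivative_within_Icc[OF Y' that] S_pos
    by (auto simp: Y_def less_imp_le dest!: has_integral_nonneg)
  have x_ge: "x0 \<le> x s" if "s \<in> {0..T}" for s
    using has_integral_derivative_within_Icc[OF x' that] S_pos x0
    by (auto simp: less_imp_le dest!: has_integral_nonneg)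
  have Y_gt: "x0 - 1 < Y s" and x_gt: "x0 - 1 < x s" if "s \<in> {0..T}" for s
    using Y_ge[OF that] x_ge[OF that] by simp_all
  have F_x: "F (x t) - F x0 = t"
    using inverse_speed_primitive_along_solution[OF S_cont S_pos x' x_gt t] x0 unfolding F_def by simp
  have F_Yx: "\<bar>F (Y t) - F (x t)\<bar> \<le> L / b * t"
    unfolding F_def
  proof (rule inverse_speed_primitive_perturbed_path[OF S_cont S_ge b Y' x' Y_gt x_gt _ _ t])
    show "\<bar>S (X s) - S (Y s)\<bar> \<le> L" if "s \<in> {0..T}" for s
      using X_eq[OF that] g[OF that] by (intro S_mod) (simp add: Y_def)
    show "Y 0 = x 0" using x0 unfolding Y_def by simp
  qed
  have trapped: "v \<le> x0 + R" if "x0 \<le> v" "F v - F x0 \<le> 2 * T" for v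
  proof (rule le_of_inverse_speed_primitive_less[OF S_cont S_pos _ that(1) R(1) Smax])
    have "2 * T < R / Smax" using R Smax_ge b by (simp add: pos_less_divide_eq mult.commute)
    then show "inverse_speed_primitive S (x0 - 1) v - inverse_speed_primitive S (x0 - 1) x0 < R / Smax"
      using that(2) unfolding F_def by simp
  qed simp
  have "L / b * t \<le> 1 * T" using L b L_nonneg t by (intro mult_mono) auto
  then have "F (x t) - F x0 \<le> 2 * T" "F (Y t) - F x0 \<le> 2 * T"
    using F_x F_Yx t by (auto simp: abs_le_iff)
  then have "x t \<le> x0 + R" "Y t \<le> x0 + R"
    using trapped x_ge[OF t] Y_ge[OF t] by blast+
  then have "\<bar>Y t - x t\<bar> \<le> Smax * \<bar>F (Y t) - F (x t)\<bar>"
    unfolding F_def using x_ge[OF t] Y_ge[OF t]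
    by (intro abs_diff_le_inverse_speed_primitive[OF S_cont S_pos _ _ _ Smax]) auto
  also have "\<dots> \<le> Smax * (L / b * T)"
  proof (rule mult_left_mono)
    show "\<bar>F (Y t) - F (x t)\<bar> \<le> L / b * T"
      using F_Yx mult_left_mono[of t T "L / b"] t L_nonneg b by simp
  qed (use Smax_ge b in simp)
  finally have "\<bar>Y t - x t\<bar> \<le> Smax * T * L / b" by (simp add: ac_simps)
  then show ?thesis using X_eq[OF t] g[OF t] unfolding Y_def by simp
qed

lemma exists_radius_gt_sublinear:
  fixes T a H0 D \<kappa> :: real
  assumes T: "T > 0" and a: "a > 0" and H0: "H0 \<ge> 0" and D: "D \<ge> 0" and \<kappa>: "0 < \<kappa>" "\<kappa> < 1"
  shows "\<exists>R>0. R > 2 * T * (a * (D + R) powr \<kappa> + H0)"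
proof -
  define c where "c = 4 * T * a + 2 * T * H0 + 1"
  have c: "c \<ge> 1" using T a H0 unfolding c_def by simp
  define R where "R = max (max 1 D) (c powr (1 / (1 - \<kappa>)))"
  have R1: "R \<ge> 1" and RD: "R \<ge> D" unfolding R_def by auto
  have R\<kappa>: "R powr \<kappa> \<ge> 1" using R1 \<kappa> by (intro ge_one_powr_ge_zero) auto
  have "(D + R) powr \<kappa> \<le> (2 * R) powr \<kappa>" by (rule powr_mono2) (use \<kappa> D RD in auto)
  also have "\<dots> = 2 powr \<kappa> * R powr \<kappa>" using R1 by (simp add: powr_mult)
  also have "\<dots> \<le> 2 * R powr \<kappa>"
    using powr_mono[of \<kappa> 1 2] \<kappa> R\<kappa> by (intro mult_right_mono) auto
  finally have "2 * T * (a * (D + R) powr \<kappa> + H0) \<le> 2 * T * (a * (2 * R powr \<kappa>) + H0)"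
    using T a by (intro mult_left_mono add_right_mono) auto
  also have "\<dots> \<le> (4 * T * a + 2 * T * H0) * R powr \<kappa>"
    using mult_left_mono[OF R\<kappa>, of "2 * T * H0"] T H0 by (simp add: algebra_simps)
  also have "\<dots> < c * R powr \<kappa>" using R\<kappa> R1 unfolding c_def by (simp add: distrib_right)
  also have "c \<le> R powr (1 - \<kappa>)"
  proof -
    have "c = (c powr (1 / (1 - \<kappa>))) powr (1 - \<kappa>)" using c \<kappa> by (simp add: powr_powr)
    also have "\<dots> \<le> R powr (1 - \<kappa>)" unfolding R_def by (rule powr_mono2) (use \<kappa> in auto)
    finally show ?thesis .
  qed
  then have "c * R powr \<kappa> \<le> R powr (1 - \<kappa>) * R powr \<kappa>" using R\<kappa> by (intro mult_right_mono) auto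
  also have "\<dots> = R" using R1 by (simp add: powr_add[symmetric])
  finally show ?thesis using R1 by (intro exI[of _ R]) auto
qed

locale small_noise_drift =
  fixes a \<kappa> b H0 H1 T :: real and h h' :: "real \<Rightarrow> real"
  assumes T: "T > 0" and \<kappa>: "0 < \<kappa>" "\<kappa> \<le> 1" and a: "a > 0" and b: "b > 0"
    and h': "\<And>y. (h has_real_derivative h' y) (at y)" "\<And>y. \<bar>h' y\<bar> \<le> H1"
    and h: "\<And>y. b \<le> h y" "\<And>y. \<bar>h y\<bar> \<le> H0"
begin

lemma sde_deviation_prob_le:
  fixes W X :: "real \<Rightarrow> 'a \<Rightarrow> real" and x :: "real \<Rightarrow> real" and D R :: real
  defines "Smax \<equiv> a * (D + R) powr \<kappa> + H0"
  assumes \<theta>: "\<bar>x0 - \<theta>\<bar> \<le> D" and R: "R > 0" "R > 2 * T * Smax"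
    and sw: "standard_wiener M W" and sde: "sde_solution M W (drift a \<kappa> h \<theta>) x0 \<epsilon> T X"
    and x: "x 0 = x0" "\<And>t. t \<in> {0..T} \<Longrightarrow> (x has_real_derivative drift a \<kappa> h \<theta> (x t)) (at t within {0..T})"
    and \<epsilon>: "\<epsilon> > 0" and r: "0 \<le> r" "2048 * T \<le> r^2"
    and \<eta>: "\<epsilon> * r \<le> 1" "(a + H1) * (\<epsilon> * r) powr \<kappa> \<le> b"
    and \<delta>: "\<epsilon> * r + Smax * T * ((a + H1) * (\<epsilon> * r) powr \<kappa>) / b \<le> \<delta>"
  shows "prob_space.prob M {\<omega>\<in>space M. (\<Squnion>t\<in>{0..T}. \<bar>X t \<omega> - x t\<bar>) > \<delta>} \<le> exp (-(r^2 / (128 * T)))"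
proof (rule standard_wiener_sup_tail[OF sw T r], safe)
  fix \<omega> assume \<omega>: "\<omega> \<in> space M" and dev: "\<delta> < (\<Squnion>t\<in>{0..T}. \<bar>X t \<omega> - x t\<bar>)"
  show "\<exists>t\<in>{0..T}. r < \<bar>W t \<omega>\<bar>"
  proof (rule ccontr)
    assume "\<not> (\<exists>t\<in>{0..T}. r < \<bar>W t \<omega>\<bar>)"
    then have "\<bar>W t \<omega>\<bar> \<le> r" if "t \<in> {0..T}" for t
      using that by (simp add: not_less)
    then have noise: "\<bar>\<epsilon> * W t \<omega>\<bar> \<le> \<epsilon> * r" if "t \<in> {0..T}" for t
      using that \<epsilon> by (simp add: abs_mult)
    have "\<bar>X t \<omega> - x t\<bar> \<le> \<delta>" if t: "t \<in> {0..T}" for t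
    proof -
      have "\<bar>X t \<omega> - x t\<bar> \<le> \<epsilon> * r + Smax * T * ((a + H1) * (\<epsilon> * r) powr \<kappa>) / b"
      proof (rule perturbed_ode_deviation_le[where X="\<lambda>t. X t \<omega>" and g="\<lambda>t. \<epsilon> * W t \<omega>",
            OF T continuous_on_drift[OF h'(1) \<kappa>(1)] _ b R])
        show "drift a \<kappa> h \<theta> z \<le> Smax" if "z \<in> {x0..x0+R}" for z
        proof -
          have "\<bar>z - \<theta>\<bar> powr \<kappa> \<le> (D + R) powr \<kappa>" using that \<theta> \<kappa> by (intro powr_mono2) auto
          then show ?thesis unfolding drift_def Smax_def using a h(2)[of z] by (smt (verit) mult_left_mono)
        qed
        show "\<bar>drift a \<kappa> h \<theta> u - drift a \<kappa> h \<theta> v\<bar> \<le> (a + H1) * (\<epsilon> * r) powr \<kappa>"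
          if "\<bar>u - v\<bar> \<le> \<epsilon> * r" for u v
          using \<epsilon> r \<eta>(1) that by (intro drift_abs_diff_le[OF h' a \<kappa>]) auto
        show "continuous_on {0..T} (\<lambda>t. X t \<omega>)"
          using sde \<omega> unfolding sde_solution_def by auto
        show "X s \<omega> = x0 + integral {0..s} (\<lambda>s. drift a \<kappa> h \<theta> (X s \<omega>)) + \<epsilon> * W s \<omega>"
          if "s \<in> {0..T}" for s
          using sde \<omega> that unfolding sde_solution_def by auto
      qed (use a h(1) \<eta>(2) noise x t in \<open>auto simp: drift_def add_nonneg_pos add_increasing\<close>)
      with \<delta> show ?thesis by linarith
    qed
    then have "(\<Squnion>t\<in>{0..T}. \<bar>X t \<omega> - x t\<bar>) \<le> \<delta>"
      using T by (intro cSup_least) auto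
    with dev show False by simp
  qed
qed

lemma sde_deviation_prob_le_powr:
  fixes W X :: "real \<Rightarrow> 'a \<Rightarrow> real" and x :: "real \<Rightarrow> real" and D R :: real
  defines "Smax \<equiv> a * (D + R) powr \<kappa> + H0"
  assumes \<theta>: "\<bar>x0 - \<theta>\<bar> \<le> D" and R: "R > 0" "R > 2 * T * Smax"
    and sw: "standard_wiener M W" and sde: "sde_solution M W (drift a \<kappa> h \<theta>) x0 \<epsilon> T X"
    and x: "x 0 = x0" "\<And>t. t \<in> {0..T} \<Longrightarrow> (x has_real_derivative drift a \<kappa> h \<theta> (x t)) (at t within {0..T})"
    and \<epsilon>: "0 < \<epsilon>" "\<epsilon> < 1" and \<gamma>: "0 < \<gamma>" "\<gamma> < 1"
    and small: "(a + H1) * \<epsilon> powr (\<gamma> * \<kappa>) \<le> b" "(1 + Smax * T * (a + H1) / b) * \<epsilon> powr (\<gamma> * \<kappa> - \<kappa>1) \<le> 1"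
      "\<epsilon> powr (2 - 2 * \<gamma>) < 1 / (2048 * T)"
  shows "prob_space.prob M {\<omega>\<in>space M. (\<Squnion>t\<in>{0..T}. \<bar>X t \<omega> - x t\<bar>) > \<epsilon> powr \<kappa>1}
    \<le> exp (- (1 / (128 * T)) * \<epsilon> powr (- (2 - 2 * \<gamma>)))"
proof -
  define r where "r = \<epsilon> powr (\<gamma> - 1)"
  have \<eta>: "\<epsilon> * r = \<epsilon> powr \<gamma>"
    using \<epsilon> powr_add[of \<epsilon> 1 "\<gamma> - 1"] unfolding r_def by simp
  have \<eta>_le: "\<epsilon> powr \<gamma> \<le> 1" using \<epsilon> \<gamma> by (intro powr_le1) auto
  have \<eta>\<kappa>: "(\<epsilon> powr \<gamma>) powr \<kappa> = \<epsilon> powr (\<gamma> * \<kappa>)" by (simp add: powr_powr)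
  have r2: "r^2 = \<epsilon> powr (- (2 - 2 * \<gamma>))"
    unfolding r_def by (simp add: power2_eq_square powr_add[symmetric])
  have "2048 * T \<le> 1 / \<epsilon> powr (2 - 2 * \<gamma>)"
    using small(3) \<epsilon> T by (simp add: field_simps)
  then have noise: "2048 * T \<le> r^2"
    unfolding r2 powr_minus_divide .
  have "\<epsilon> powr \<gamma> + Smax * T * ((a + H1) * \<epsilon> powr (\<gamma> * \<kappa>)) / b
      \<le> (1 + Smax * T * (a + H1) / b) * \<epsilon> powr (\<gamma> * \<kappa>)"
    using le_powr_of_le_one[OF _ \<eta>_le \<kappa>(2)] \<eta>\<kappa> by (simp add: algebra_simps)
  also have "\<dots> = (1 + Smax * T * (a + H1) / b) * \<epsilon> powr (\<gamma> * \<kappa> - \<kappa>1) * \<epsilon> powr \<kappa>1"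
    by (simp add: powr_add[symmetric])
  also have "\<dots> \<le> \<epsilon> powr \<kappa>1"
  proof -
    have "0 \<le> Smax"
      unfolding Smax_def using a h(2)[of 0] by (intro add_nonneg_nonneg mult_nonneg_nonneg) auto
    then have "0 \<le> 1 + Smax * T * (a + H1) / b"
      using h'(2)[of 0] a b T by (intro add_nonneg_nonneg divide_nonneg_nonneg mult_nonneg_nonneg) auto
    then show ?thesis using small(2) by (intro mult_left_le_one_le mult_nonneg_nonneg) auto
  qed
  finally have \<delta>: "\<epsilon> * r + Smax * T * ((a + H1) * (\<epsilon> * r) powr \<kappa>) / b \<le> \<epsilon> powr \<kappa>1"
    unfolding \<eta> \<eta>\<kappa> .
  show ?thesis
    using sde_deviation_prob_le[OF \<theta> R[unfolded Smax_def] sw sde x \<epsilon>(1) _ _ _ _ \<delta>[unfolded Smax_def]]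
      \<eta> \<eta>_le \<eta>\<kappa> small(1) noise r2 by (simp add: r_def)
qed

end

lemma eventually_at_right_powr_less:
  fixes c d p :: real
  assumes "0 < p" "0 < d"
  shows "eventually (\<lambda>\<epsilon>. c * \<epsilon> powr p < d) (at_right 0)"
proof -
  have "((\<lambda>\<epsilon>::real. \<epsilon> powr p) \<longlongrightarrow> 0 powr p) (at_right 0)"
    by (rule tendsto_powr'[OF tendsto_ident_at tendsto_const])
       (use assms in \<open>auto intro: eventually_mono[OF eventually_at_right_less] less_imp_le\<close>)
  then have "((\<lambda>\<epsilon>. c * \<epsilon> powr p) \<longlongrightarrow> c * 0) (at_right 0)"
    using assms by (intro tendsto_mult tendsto_const) simp
  then show ?thesis by (rule order_tendstoD(2)) (use assms in simp)
qed

theorem lemma2: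
  fixes a \<kappa> x0 T \<alpha> \<beta> b H1 :: real
    and h h' :: "real \<Rightarrow> real"
    and x :: "real \<Rightarrow> real \<Rightarrow> real"
  assumes T_pos: "T > 0"
    and kappa: "0 < \<kappa>" "\<kappa> < 1/2"
    and a_pos: "a > 0"
    and h_bdd: "\<exists>H0. \<forall>y. \<bar>h y\<bar> \<le> H0"
    and h_deriv: "\<And>y. (h has_real_derivative h' y) (at y)"
    and h'_cont: "continuous_on UNIV h'"
    and h'_bdd: "\<And>y. \<bar>h' y\<bar> \<le> H1"
    and b_pos: "b > 0"
    and h_lower: "\<And>y. h y \<ge> b"
    and x_ode: "\<And>\<theta>. \<theta> \<in> {\<alpha><..<\<beta>} \<Longrightarrow> x \<theta> 0 = x0 \<and>
          (\<forall>t\<in>{0..T}. (x \<theta> has_real_derivative drift a \<kappa> h \<theta> (x \<theta> t)) (at t within {0..T}))"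
    and alpha: "\<alpha> > x0"
    and beta: "\<beta> < (INF \<theta>\<in>{\<alpha><..<\<beta>}. x \<theta> T)"
  shows "\<forall>\<kappa>1. 0 < \<kappa>1 \<and> \<kappa>1 < \<kappa> \<longrightarrow>
    (\<exists>\<nu> c \<epsilon>0. \<nu> > 0 \<and> c > 0 \<and> \<epsilon>0 > 0 \<and>
      (\<forall>\<epsilon>. 0 < \<epsilon> \<and> \<epsilon> < \<epsilon>0 \<longrightarrow>
        (\<forall>\<theta>\<in>{\<alpha><..<\<beta>}. \<forall>(M :: 'a measure) W X.
           standard_wiener M W \<and> sde_solution M W (drift a \<kappa> h \<theta>) x0 \<epsilon> T X \<longrightarrow>
           prob_space.prob M {\<omega>\<in>space M. (\<Squnion>t\<in>{0..T}. \<bar>X t \<omega> - x \<theta> t\<bar>) > \<epsilon> powr \<kappa>1}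
             \<le> exp (- c * \<epsilon> powr (- \<nu>)))))"
proof (intro allI impI)
  fix \<kappa>1 :: real assume \<kappa>1: "0 < \<kappa>1 \<and> \<kappa>1 < \<kappa>"
  obtain H0 where H0: "\<And>y. \<bar>h y\<bar> \<le> H0" using h_bdd by blast
  interpret small_noise_drift a \<kappa> b H0 H1 T h h'
    using T_pos kappa a_pos b_pos h_deriv h'_bdd h_lower H0 by unfold_locales auto
  define D where "D = \<bar>\<beta> - x0\<bar>"
  have "0 \<le> H0" "0 \<le> D" "\<kappa> < 1" using H0[of 0] kappa unfolding D_def by simp_all
  then obtain R where R: "R > 0" "R > 2 * T * (a * (D + R) powr \<kappa> + H0)"
    using exists_radius_gt_sublinear[OF T_pos a_pos _ _ kappa(1)] by blast
  define \<gamma> where "\<gamma> = (1 + \<kappa>1 / \<kappa>) / 2"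
  have "0 < \<kappa>1 / \<kappa>" "\<kappa>1 / \<kappa> < 1" using \<kappa>1 kappa by simp_all
  then have \<gamma>: "0 < \<gamma>" "\<gamma> < 1" "\<kappa>1 < \<gamma> * \<kappa>"
    using kappa unfolding \<gamma>_def by (auto simp: field_simps)
  define C where "C = 1 + (a * (D + R) powr \<kappa> + H0) * T * (a + H1) / b"
  have "eventually (\<lambda>\<epsilon>::real. \<epsilon> < 1) (at_right 0)"
    by (rule eventually_at_rightI[of 0 "1::real"]) auto
  moreover have "eventually (\<lambda>\<epsilon>. (a + H1) * \<epsilon> powr (\<gamma> * \<kappa>) < b) (at_right 0)"
    using \<gamma> kappa b_pos by (intro eventually_at_right_powr_less) auto
  moreover have "eventually (\<lambda>\<epsilon>. C * \<epsilon> powr (\<gamma> * \<kappa> - \<kappa>1) < 1) (at_right 0)"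
    using \<gamma> by (intro eventually_at_right_powr_less) auto
  moreover have "eventually (\<lambda>\<epsilon>. \<epsilon> powr (2 - 2 * \<gamma>) < 1 / (2048 * T)) (at_right 0)"
    using eventually_at_right_powr_less[of "2 - 2 * \<gamma>" "1 / (2048 * T)" 1] \<gamma> T_pos by simp
  ultimately have "eventually (\<lambda>\<epsilon>. \<epsilon> < 1 \<and> (a + H1) * \<epsilon> powr (\<gamma> * \<kappa>) < b \<and> C * \<epsilon> powr (\<gamma> * \<kappa> - \<kappa>1) < 1
      \<and> \<epsilon> powr (2 - 2 * \<gamma>) < 1 / (2048 * T)) (at_right 0)"
    by (intro eventually_conj)
  then obtain \<epsilon>0 where \<epsilon>0: "\<epsilon>0 > 0" and small: "\<And>\<epsilon>. 0 < \<epsilon> \<Longrightarrow> \<epsilon> < \<epsilon>0 \<Longrightarrow> \<epsilon> < 1 \<and>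
      (a + H1) * \<epsilon> powr (\<gamma> * \<kappa>) < b \<and> C * \<epsilon> powr (\<gamma> * \<kappa> - \<kappa>1) < 1 \<and> \<epsilon> powr (2 - 2 * \<gamma>) < 1 / (2048 * T)"
    unfolding eventually_at_right[of 0 1, OF zero_less_one] by auto
  show "\<exists>\<nu> c \<epsilon>0. \<nu> > 0 \<and> c > 0 \<and> \<epsilon>0 > 0 \<and> (\<forall>\<epsilon>. 0 < \<epsilon> \<and> \<epsilon> < \<epsilon>0 \<longrightarrow> (\<forall>\<theta>\<in>{\<alpha><..<\<beta>}. \<forall>(M :: 'a measure) W X.
      standard_wiener M W \<and> sde_solution M W (drift a \<kappa> h \<theta>) x0 \<epsilon> T X \<longrightarrow>
      prob_space.prob M {\<omega>\<in>space M. (\<Squnion>t\<in>{0..T}. \<bar>X t \<omega> - x \<theta> t\<bar>) > \<epsilon> powr \<kappa>1} \<le> exp (- c * \<epsilon> powr (- \<nu>))))"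
  proof (rule exI[of _ "2 - 2 * \<gamma>"], rule exI[of _ "1 / (128 * T)"], rule exI[of _ \<epsilon>0],
      intro conjI allI impI ballI)
    fix \<epsilon> \<theta> and M :: "'a measure" and W X
    assume \<epsilon>: "0 < \<epsilon> \<and> \<epsilon> < \<epsilon>0" and \<theta>: "\<theta> \<in> {\<alpha><..<\<beta>}"
      and sde: "standard_wiener M W \<and> sde_solution M W (drift a \<kappa> h \<theta>) x0 \<epsilon> T X"
    have "\<bar>x0 - \<theta>\<bar> \<le> D" using \<theta> alpha unfolding D_def by auto
    then show "prob_space.prob M {\<omega>\<in>space M. (\<Squnion>t\<in>{0..T}. \<bar>X t \<omega> - x \<theta> t\<bar>) > \<epsilon> powr \<kappa>1}
        \<le> exp (- (1 / (128 * T)) * \<epsilon> powr (- (2 - 2 * \<gamma>)))"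
      using sde x_ode[OF \<theta>] \<epsilon> \<gamma>(1,2) small[of \<epsilon>] unfolding C_def
      by (intro sde_deviation_prob_le_powr[OF _ R]) auto
  qed (use \<gamma> T_pos \<epsilon>0 in auto)
qed

end
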